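(* Let $\mu$ be a translation invariant probability measure on $\mathbb{N}^{\mathbb{Z}}$ such that $\mathbb{E}_\mu(\eta(0))=1$ and such that $\frac{1}{\sqrt{n}}\sum_{x=-n}^{n}(\eta(x)-1)$ converges in distribution, as $n\to\infty$, to a nondegenerate normal random variable. Then $\mu$ is not stabilizable.
   Context: Sandpile model on $\mathbb{Z}$ ($d=1$): a configuration $\eta\in\mathbb{N}^{\mathbb{Z}}$ is stable if $\eta(x)\le 1$ for all $x$; toppling an unstable site $x$ ($\eta(x)\ge 2$) removes 2 grains from $x$ and adds one to each of $x\pm1$. A toppling procedure is a measurable map $T:[0,\infty)\times\mathbb{Z}\times\mathbb{N}^{\mathbb{Z}}\to\mathbb{N}$ ($T(t,x,\eta)$ = number of topplings at $x$ up to time $t$) with $T(0,\cdot,\eta)=0$, $t\mapsto T(t,x,\eta)$ right-continuous, nondecreasing, with jumps of size at most one and finitely many jumps in finite time intervals, and with no infinite chain of topplings at neighboring sites occurring at decreasing times. It is legal if only unstable sites of the current configuration $\eta-\Delta T(t-,\cdot,\eta)$ topple, where $\Delta_{x,y}=2\mathbf{1}_{x=y}-\mathbf{1}_{|x-y|=1}$. A configuration is stabilizable if some legal toppling procedure has $T(\infty,x,\eta)<\infty$ for all $x$ and stable final configuration $\eta-\Delta T(\infty,\cdot,\eta)$; a measure $\mu$ is stabilizable if $\mu$-a.e. configuration is stabilizable. *)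

theory Defs
  imports "HOL-Probability.Probability"
begin

type_synonym config = "int \<Rightarrow> nat"

definition config_space :: "config measure" where
  "config_space = PiM UNIV (\<lambda>_. count_space UNIV)"

text \<open>A toppling procedure: T t x eta = number of topplings at x up to time t.\<close>
type_synonym toppling = "real \<Rightarrow> int \<Rightarrow> config \<Rightarrow> nat"

definition T_left :: "toppling \<Rightarrow> real \<Rightarrow> int \<Rightarrow> config \<Rightarrow> real" where
  "T_left T t x eta = Lim (at_left t) (\<lambda>s. real (T s x eta))"

definition topples_at :: "toppling \<Rightarrow> real \<Rightarrow> int \<Rightarrow> config \<Rightarrow> bool" where
  "topples_at T t x eta \<longleftrightarrow> t > 0 \<and> real (T t x eta) \<noteq> T_left T t x eta"

definition toppling_procedure :: "toppling \<Rightarrow> bool" where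
  "toppling_procedure T \<longleftrightarrow>
     (\<lambda>(t, x, eta). T t x eta) \<in>
        measurable (restrict_space borel {0..} \<Otimes>\<^sub>M count_space UNIV \<Otimes>\<^sub>M config_space)
                   (count_space UNIV)
   \<and> (\<forall>x eta. T 0 x eta = 0)
   \<and> (\<forall>x eta. \<forall>t\<ge>0. ((\<lambda>s. real (T s x eta)) \<longlongrightarrow> real (T t x eta)) (at_right t))
   \<and> (\<forall>x eta. \<forall>s t. 0 \<le> s \<longrightarrow> s \<le> t \<longrightarrow> T s x eta \<le> T t x eta)
   \<and> (\<forall>x eta. \<forall>t>0. ((\<lambda>s. real (T s x eta)) \<longlongrightarrow> T_left T t x eta) (at_left t)
                     \<and> real (T t x eta) - T_left T t x eta \<le> 1)
   \<and> (\<forall>x eta. \<forall>t\<ge>0. finite {s. 0 \<le> s \<and> s \<le> t \<and> topples_at T s x eta})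
   \<and> (\<forall>eta. \<not> (\<exists>xs ts :: nat \<Rightarrow> _.
          (\<forall>k. \<bar>xs (Suc k) - xs k\<bar> = 1 \<and> ts (Suc k) < ts k \<and> topples_at T (ts k) (xs k) eta)))"

definition current_config :: "toppling \<Rightarrow> real \<Rightarrow> config \<Rightarrow> int \<Rightarrow> real" where
  "current_config T t eta x =
     real (eta x) - 2 * T_left T t x eta + T_left T t (x - 1) eta + T_left T t (x + 1) eta"

definition legal :: "toppling \<Rightarrow> bool" where
  "legal T \<longleftrightarrow> (\<forall>eta t x. topples_at T t x eta \<longrightarrow> current_config T t eta x \<ge> 2)"

definition stabilizable :: "config \<Rightarrow> bool" where
  "stabilizable eta \<longleftrightarrow>
     (\<exists>T. toppling_procedure T \<and> legal T \<and>
       (\<exists>F :: int \<Rightarrow> nat.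
          (\<forall>x. ((\<lambda>t. real (T t x eta)) \<longlongrightarrow> real (F x)) at_top) \<and>
          (\<forall>x. int (eta x) - 2 * int (F x) + int (F (x - 1)) + int (F (x + 1)) \<le> 1)))"

definition stabilizable_measure :: "config measure \<Rightarrow> bool" where
  "stabilizable_measure \<mu> \<longleftrightarrow> (AE eta in \<mu>. stabilizable eta)"

definition translation_invariant :: "config measure \<Rightarrow> bool" where
  "translation_invariant \<mu> \<longleftrightarrow> (\<forall>z::int. distr \<mu> config_space (\<lambda>eta x. eta (x + z)) = \<mu>)"

end

theory Submission
  imports Defs
begin

(* If eta is stabilizable, some odometer u >= 0 makes eta - Delta u <= 1; these odometers are
   closed under pointwise minimum, so there is a least one, m.  It commutes with translations and
   depends measurably on eta.  Summing eta - Delta m <= 1 over [-n, n] telescopes: the excess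
   sum (eta x - 1) over [-n, n] is at most the difference of the gradients m (y + 1) - m y at the
   two ends of the interval.  By translation invariance both gradients have the law of one fixed
   random variable, so the probability that the excess exceeds sqrt n tends to 0.  The central
   limit theorem keeps it near P(N > 1) > 0. *)

(* u x counts the topplings at x; the condition says that eta - Delta u is stable. *)
definition stabilizing_odometers :: "config \<Rightarrow> (int \<Rightarrow> nat) set" where
  "stabilizing_odometers eta =
     {u. \<forall>x. int (eta x) - 2 * int (u x) + int (u (x - 1)) + int (u (x + 1)) \<le> 1}"

(* Without stabilizing odometer this is the LEAST of an empty set, an unspecified value. *)
definition least_odometer :: "config \<Rightarrow> int \<Rightarrow> nat" where
  "least_odometer eta x = Inf ((\<lambda>u. u x) ` stabilizing_odometers eta)"

(* The only use of the toppling dynamics: a stabilizing procedure yields its final odometer. *)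
lemma stabilizable_imp_stabilizing_odometer:
  "stabilizable eta \<Longrightarrow> stabilizing_odometers eta \<noteq> {}"
  unfolding stabilizable_def stabilizing_odometers_def by auto

lemma least_odometer_le: "u \<in> stabilizing_odometers eta \<Longrightarrow> least_odometer eta x \<le> u x"
  unfolding least_odometer_def by (simp add: cInf_lower)

lemma least_odometer_stabilizing:
  assumes "stabilizing_odometers eta \<noteq> {}"
  shows "least_odometer eta \<in> stabilizing_odometers eta"
  unfolding stabilizing_odometers_def
proof (intro CollectI allI)
  fix x
  have "least_odometer eta x \<in> (\<lambda>u. u x) ` stabilizing_odometers eta"
    unfolding least_odometer_def using assms by (intro Inf_nat_def1) auto
  then obtain u where u: "u \<in> stabilizing_odometers eta" "u x = least_odometer eta x"
    by auto
  have "least_odometer eta (x - 1) \<le> u (x - 1)" "least_odometer eta (x + 1) \<le> u (x + 1)"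
    using least_odometer_le[OF u(1)] by auto
  moreover have "int (eta x) - 2 * int (u x) + int (u (x - 1)) + int (u (x + 1)) \<le> 1"
    using u(1) unfolding stabilizing_odometers_def by blast
  ultimately show "int (eta x) - 2 * int (least_odometer eta x)
      + int (least_odometer eta (x - 1)) + int (least_odometer eta (x + 1)) \<le> 1"
    using u(2) by linarith
qed

lemma stabilizing_odometer_comp:
  assumes "\<And>x. {f (x - 1), f (x + 1)} = {f x - 1, f x + 1}"
    and "u \<in> stabilizing_odometers eta"
  shows "u \<circ> f \<in> stabilizing_odometers (eta \<circ> f)"
  unfolding stabilizing_odometers_def
proof (intro CollectI allI)
  fix x
  have "int (u (f (x - 1))) + int (u (f (x + 1))) = int (u (f x - 1)) + int (u (f x + 1))"
    using assms(1)[of x] by (auto simp: doubleton_eq_iff)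
  moreover have "int (eta (f x)) - 2 * int (u (f x)) + int (u (f x - 1)) + int (u (f x + 1)) \<le> 1"
    using assms(2) unfolding stabilizing_odometers_def by blast
  ultimately show "int ((eta \<circ> f) x) - 2 * int ((u \<circ> f) x)
      + int ((u \<circ> f) (x - 1)) + int ((u \<circ> f) (x + 1)) \<le> 1"
    by simp
qed

lemma stabilizing_odometers_shift:
  "stabilizing_odometers (\<lambda>y. eta (y + z)) = (\<lambda>u y. u (y + z)) ` stabilizing_odometers eta"
proof (intro set_eqI iffI)
  fix v assume "v \<in> stabilizing_odometers (\<lambda>y. eta (y + z))"
  then have "v \<circ> (\<lambda>y. y - z) \<in> stabilizing_odometers ((\<lambda>y. eta (y + z)) \<circ> (\<lambda>y. y - z))"
    by (intro stabilizing_odometer_comp) auto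
  then show "v \<in> (\<lambda>u y. u (y + z)) ` stabilizing_odometers eta"
    by (intro image_eqI[of _ _ "v \<circ> (\<lambda>y. y - z)"]) (auto simp: comp_def)
next
  fix v assume "v \<in> (\<lambda>u y. u (y + z)) ` stabilizing_odometers eta"
  then obtain u where "u \<in> stabilizing_odometers eta" "v = u \<circ> (\<lambda>y. y + z)"
    by (auto simp: comp_def)
  moreover have "{x - 1 + z, x + 1 + z} = {x + z - 1, x + z + 1}" for x
    by (simp add: algebra_simps)
  ultimately show "v \<in> stabilizing_odometers (\<lambda>y. eta (y + z))"
    using stabilizing_odometer_comp[of "\<lambda>y. y + z" u eta] by (simp add: comp_def)
qed

lemma least_odometer_shift: "least_odometer (\<lambda>y. eta (y + z)) x = least_odometer eta (x + z)"
  unfolding least_odometer_def stabilizing_odometers_shift image_image ..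

(* Given the values a, b at the sites 0 and 1, every
   stabilizing odometer lies below the solutions of the equality recursion along both
   half-lines, and these solutions form a stabilizing odometer whenever they are nonnegative.
   So the countable condition feasible eta a b decides whether a, b extend. *)
fun ray_solution :: "(nat \<Rightarrow> int) \<Rightarrow> int \<Rightarrow> int \<Rightarrow> nat \<Rightarrow> int" where
  "ray_solution d p q 0 = p"
| "ray_solution d p q (Suc 0) = q"
| "ray_solution d p q (Suc (Suc n)) = 2 * ray_solution d p q (Suc n) - ray_solution d p q n - d n"

lemma le_ray_solution:
  assumes "v 0 = p" "v (Suc 0) = q" "\<And>n. v (Suc (Suc n)) \<le> 2 * v (Suc n) - v n - d n"
  shows "v n \<le> ray_solution d p q n"
proof -
  have "v n \<le> ray_solution d p q n
      \<and> v (Suc n) - v n \<le> ray_solution d p q (Suc n) - ray_solution d p q n"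
  proof (induction n)
    case (Suc n)
    then show ?case using assms(3)[of n] by simp
  qed (use assms in simp)
  then show ?thesis ..
qed

definition ray_bound :: "config \<Rightarrow> int \<Rightarrow> int \<Rightarrow> nat \<Rightarrow> int" where
  "ray_bound eta a b = ray_solution (\<lambda>n. int (eta (int n + 1)) - 1) a b"

lemma stabilizing_odometer_le_ray_bound:
  assumes "u \<in> stabilizing_odometers eta"
  shows "int (u (int n)) \<le> ray_bound eta (u 0) (u 1) n"
  unfolding ray_bound_def
proof (rule le_ray_solution)
  fix k
  have "int (eta (int k + 1)) - 2 * int (u (int k + 1)) + int (u (int k + 1 - 1))
      + int (u (int k + 1 + 1)) \<le> 1"
    using assms unfolding stabilizing_odometers_def by blast
  then show "int (u (int (Suc (Suc k)))) \<le> 2 * int (u (int (Suc k))) - int (u (int k))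
      - (int (eta (int k + 1)) - 1)"
    by (simp add: algebra_simps)
qed simp_all

(* Reflection exchanging the sites 0 and 1; it turns the left half-line into a right one. *)
definition reflect :: "(int \<Rightarrow> 'a) \<Rightarrow> int \<Rightarrow> 'a" where
  "reflect f x = f (1 - x)"

lemma reflect_stabilizing_odometer:
  "u \<in> stabilizing_odometers eta \<Longrightarrow> reflect u \<in> stabilizing_odometers (reflect eta)"
proof -
  assume "u \<in> stabilizing_odometers eta"
  moreover have "{1 - (x - 1), 1 - (x + 1)} = {1 - x - 1, 1 - x + 1}" for x :: int
    by auto
  ultimately have "u \<circ> (\<lambda>x. 1 - x) \<in> stabilizing_odometers (eta \<circ> (\<lambda>x. 1 - x))"
    by (rule stabilizing_odometer_comp[rotated])
  then show ?thesis
    by (simp add: reflect_def[abs_def] comp_def)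
qed

definition feasible :: "config \<Rightarrow> int \<Rightarrow> int \<Rightarrow> bool" where
  "feasible eta a b \<longleftrightarrow> (\<forall>n. 0 \<le> ray_bound eta a b n \<and> 0 \<le> ray_bound (reflect eta) b a n)"

lemma stabilizing_odometer_feasible:
  assumes "u \<in> stabilizing_odometers eta"
  shows "feasible eta (u 0) (u 1)"
  unfolding feasible_def
proof
  fix n
  have "0 \<le> int (u (int n))" by simp
  also have "\<dots> \<le> ray_bound eta (u 0) (u 1) n"
    by (rule stabilizing_odometer_le_ray_bound[OF assms])
  finally have "0 \<le> ray_bound eta (u 0) (u 1) n" .
  moreover have "int (reflect u (int n)) \<le> ray_bound (reflect eta) (u 1) (u 0) n"
    using stabilizing_odometer_le_ray_bound[OF reflect_stabilizing_odometer[OF assms]]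
    by (simp add: reflect_def)
  then have "0 \<le> ray_bound (reflect eta) (u 1) (u 0) n" by linarith
  ultimately show "0 \<le> ray_bound eta (u 0) (u 1) n \<and> 0 \<le> ray_bound (reflect eta) (u 1) (u 0) n" ..
qed

definition feasible_extension :: "config \<Rightarrow> int \<Rightarrow> int \<Rightarrow> int \<Rightarrow> int" where
  "feasible_extension eta a b x =
     (if 0 \<le> x then ray_bound eta a b (nat x) else ray_bound (reflect eta) b a (nat (1 - x)))"

lemma feasible_extension_toppling_balance:
  "int (eta x) - 2 * feasible_extension eta a b x
     + feasible_extension eta a b (x - 1) + feasible_extension eta a b (x + 1) = 1"
proof -
  let ?w = "feasible_extension eta a b"
  have w_right: "?w y = ray_bound eta a b (nat y)" if "0 \<le> y" for y
    using that by (simp add: feasible_extension_def)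
  have w_left: "?w y = ray_bound (reflect eta) b a (nat (1 - y))" if "y \<le> 1" for y
  proof -
    consider "y < 0" | "y = 0" | "y = 1" using \<open>y \<le> 1\<close> by linarith
    then show ?thesis
      by cases (auto simp: feasible_extension_def ray_bound_def numeral_2_eq_2)
  qed
  show ?thesis
  proof (cases "1 \<le> x")
    case True
    define n where "n = nat (x - 1)"
    have x: "x = int n + 1" using True by (simp add: n_def)
    then have "?w (x + 1) = ray_bound eta a b (Suc (Suc n))" "?w x = ray_bound eta a b (Suc n)"
      "?w (x - 1) = ray_bound eta a b n"
      by (simp_all add: w_right nat_add_distrib)
    then show ?thesis using x by (simp add: ray_bound_def)
  next
    case False
    define n where "n = nat (- x)"
    have x: "x = - int n" using False by (simp add: n_def)
    then have "?w (x - 1) = ray_bound (reflect eta) b a (Suc (Suc n))"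
      "?w x = ray_bound (reflect eta) b a (Suc n)" "?w (x + 1) = ray_bound (reflect eta) b a n"
      using False by (simp_all add: w_left nat_add_distrib)
    then show ?thesis using x by (simp add: ray_bound_def reflect_def)
  qed
qed

lemma feasible_imp_stabilizing_odometer:
  assumes "feasible eta (int a) (int b)"
  shows "\<exists>u\<in>stabilizing_odometers eta. u 0 = a \<and> u 1 = b"
proof -
  define u where "u x = nat (feasible_extension eta (int a) (int b) x)" for x
  have u_extension: "int (u x) = feasible_extension eta (int a) (int b) x" for x
    using assms unfolding u_def feasible_def feasible_extension_def by auto
  have "u \<in> stabilizing_odometers eta"
    unfolding stabilizing_odometers_def
    using feasible_extension_toppling_balance by (simp add: u_extension)
  moreover have "u 0 = a" "u 1 = b"
    using u_extension[of 0] u_extension[of 1]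
    by (simp_all add: feasible_extension_def ray_bound_def)
  ultimately show ?thesis by blast
qed

lemma least_odometer_0_eq_Least:
  "least_odometer eta 0 = (LEAST a. \<exists>b. feasible eta (int a) (int b))"
proof -
  have "(\<lambda>u. u 0) ` stabilizing_odometers eta = {a. \<exists>b. feasible eta (int a) (int b)}"
    using stabilizing_odometer_feasible feasible_imp_stabilizing_odometer by fastforce
  then show ?thesis
    unfolding least_odometer_def Inf_nat_def by simp
qed

lemma space_config_space[simp]: "space config_space = UNIV"
  by (simp add: config_space_def space_PiM)

lemma measurable_config_coordinate[measurable]:
  "(\<lambda>eta. eta x) \<in> measurable config_space (count_space UNIV)"
  unfolding config_space_def by (rule measurable_component_singleton) simp

lemma measurable_config_reindex[measurable]:
  "(\<lambda>eta x. eta (f x)) \<in> measurable config_space config_space"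
  unfolding config_space_def by (rule measurable_PiM_single') (auto simp: config_space_def[symmetric])

lemma measurable_ray_solution[measurable]:
  assumes [measurable]: "\<And>n. (\<lambda>x. real_of_int (d x n)) \<in> borel_measurable M"
  shows "(\<lambda>x. real_of_int (ray_solution (d x) p q n)) \<in> borel_measurable M"
  by (induction n rule: induct_nat_012) simp_all

lemma measurable_feasible[measurable]: "Measurable.pred config_space (\<lambda>eta. feasible eta a b)"
proof -
  have feasible_iff: "feasible eta a b \<longleftrightarrow> (\<forall>n. 0 \<le> real_of_int (ray_bound eta a b n)
      \<and> 0 \<le> real_of_int (ray_bound (reflect eta) b a n))" for eta
    unfolding feasible_def by simp
  show ?thesis
    unfolding feasible_iff ray_bound_def reflect_def by measurable
qed

lemma measurable_least_odometer:
  "(\<lambda>eta. least_odometer eta x) \<in> measurable config_space (count_space UNIV)"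
proof -
  have "least_odometer eta x = (LEAST a. \<exists>b. feasible (\<lambda>y. eta (y + x)) (int a) (int b))" for eta
    using least_odometer_shift[of eta x 0] least_odometer_0_eq_Least by simp
  then show ?thesis by simp
qed

definition odometer_gradient :: "config \<Rightarrow> real" where
  "odometer_gradient eta = real (least_odometer eta 1) - real (least_odometer eta 0)"

lemma measurable_odometer_gradient[measurable]: "odometer_gradient \<in> borel_measurable config_space"
  unfolding odometer_gradient_def
  by (intro borel_measurable_diff measurable_compose[OF measurable_least_odometer]) simp_all

lemma odometer_gradient_shift:
  "odometer_gradient (\<lambda>x. eta (x + z)) = real (least_odometer eta (z + 1)) - real (least_odometer eta z)"
  unfolding odometer_gradient_def least_odometer_shift by (simp add: add.commute)

lemma sum_symmetric_interval_telescope: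
  fixes D :: "int \<Rightarrow> 'a::ab_group_add"
  shows "(\<Sum>x\<in>{- int n..int n}. D (x - 1) - D x) = D (- int n - 1) - D (int n)"
proof (induction n)
  case (Suc n)
  have interval: "{- int (Suc n)..int (Suc n)} = insert (- int n - 1) (insert (int n + 1) {- int n..int n})"
    by auto
  have "(\<Sum>x\<in>{- int (Suc n)..int (Suc n)}. D (x - 1) - D x)
      = (D (- int n - 1 - 1) - D (- int n - 1)) + ((D (int n + 1 - 1) - D (int n + 1))
        + (\<Sum>x\<in>{- int n..int n}. D (x - 1) - D x))"
    unfolding interval by (subst sum.insert; simp)+
  then show ?case
    using Suc by (simp add: add.commute)
qed simp

lemma excess_le_odometer_gradient_difference:
  assumes "stabilizing_odometers eta \<noteq> {}"
  shows "(\<Sum>x\<in>{- int n..int n}. real (eta x) - 1)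
    \<le> odometer_gradient (\<lambda>x. eta (x + (- int n - 1))) - odometer_gradient (\<lambda>x. eta (x + int n))"
proof -
  define D where "D y = real (least_odometer eta (y + 1)) - real (least_odometer eta y)" for y
  have "real (eta x) - 1 \<le> D (x - 1) - D x" for x
  proof -
    have "int (eta x) - 2 * int (least_odometer eta x) + int (least_odometer eta (x - 1))
        + int (least_odometer eta (x + 1)) \<le> 1"
      using least_odometer_stabilizing[OF assms] unfolding stabilizing_odometers_def by blast
    then show ?thesis
      unfolding D_def by simp
  qed
  then have "(\<Sum>x\<in>{- int n..int n}. real (eta x) - 1) \<le> (\<Sum>x\<in>{- int n..int n}. D (x - 1) - D x)"
    by (rule sum_mono)
  also have "\<dots> = D (- int n - 1) - D (int n)"
    by (rule sum_symmetric_interval_telescope)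
  finally show ?thesis
    unfolding odometer_gradient_shift D_def .
qed

lemma (in prob_space) cdf_distr_eq:
  fixes X :: "'a \<Rightarrow> real"
  assumes "X \<in> borel_measurable M"
  shows "cdf (distr M borel X) c = 1 - prob {x \<in> space M. c < X x}"
proof -
  have "cdf (distr M borel X) c = prob (X -` {..c} \<inter> space M)"
    unfolding cdf_def using assms by (simp add: measure_distr)
  also have "X -` {..c} \<inter> space M = space M - {x \<in> space M. c < X x}"
    by auto
  also have "prob \<dots> = 1 - prob {x \<in> space M. c < X x}"
    using assms by (intro prob_compl) measurable
  finally show ?thesis .
qed

lemma (in prob_space) tail_prob_tendsto_0:
  fixes X :: "'a \<Rightarrow> real"
  assumes "X \<in> borel_measurable M"
  shows "((\<lambda>c. prob {x \<in> space M. c < X x}) \<longlongrightarrow> 0) at_top"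
proof -
  have "((\<lambda>c. 1 - cdf (distr M borel X) c) \<longlongrightarrow> 1 - 1) at_top"
    using assms by (intro tendsto_diff tendsto_const real_distribution.cdf_lim_at_top_prob) simp
  then show ?thesis
    by (simp add: cdf_distr_eq[OF assms])
qed

lemma null_sets_normal_density_iff:
  assumes "0 < \<sigma>"
  shows "A \<in> null_sets (density lborel (normal_density m \<sigma>)) \<longleftrightarrow> A \<in> null_sets lborel"
proof -
  have "normal_density m \<sigma> x \<noteq> 0" for x
    using normal_density_pos[OF assms, of m x] by simp
  then have "(AE x in lborel. x \<in> A \<longrightarrow> ennreal (normal_density m \<sigma> x) = 0)
      \<longleftrightarrow> (AE x in lborel. x \<notin> A)"
    by (intro AE_cong) auto
  moreover have "(\<lambda>x. ennreal (normal_density m \<sigma> x)) \<in> borel_measurable lborel"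
    by simp
  ultimately show ?thesis
    using null_sets_density_iff AE_iff_null_sets[of A lborel] null_setsD2[of A lborel] by blast
qed

lemma normal_cdf:
  fixes m \<sigma> c :: real
  assumes "0 < \<sigma>"
  defines "N \<equiv> density lborel (normal_density m \<sigma>)"
  shows "isCont (cdf N) c" "cdf N c < 1"
proof -
  interpret N: real_distribution N
    unfolding N_def real_distribution_def real_distribution_axioms_def
    using prob_space_normal_density[OF assms(1)] by simp
  have "{c} \<in> null_sets lborel"
    by (simp add: null_sets_def)
  then have "{c} \<in> null_sets N"
    unfolding N_def using null_sets_normal_density_iff[OF assms(1)] by blast
  then show "isCont (cdf N) c"
    by (simp add: N.isCont_cdf measure_def null_setsD1)
  have "{c<..<c + 1} \<notin> null_sets lborel"
    by (simp add: null_sets_def)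
  then have "{c<..<c + 1} \<notin> null_sets N"
    unfolding N_def using null_sets_normal_density_iff[OF assms(1)] by blast
  then have "0 < measure N {c<..<c + 1}"
    by (simp add: N.emeasure_eq_measure null_sets_def zero_less_measure_iff)
  moreover have "measure N {..c} + measure N {c<..<c + 1} = measure N ({..c} \<union> {c<..<c + 1})"
    by (rule N.finite_measure_Union[symmetric]) auto
  moreover have "measure N ({..c} \<union> {c<..<c + 1}) \<le> 1"
    by (rule N.prob_le_1)
  ultimately show "cdf N c < 1"
    unfolding cdf_def by linarith
qed

lemma translation_invariant_prob_shift:
  assumes "translation_invariant \<mu>" "sets \<mu> = sets config_space" "A \<in> sets config_space"
  shows "measure \<mu> {eta. (\<lambda>x. eta (x + z)) \<in> A} = measure \<mu> A"
proof -
  have space: "space \<mu> = UNIV"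
    using sets_eq_imp_space_eq[OF assms(2)] by simp
  have shift: "(\<lambda>eta x. eta (x + z)) \<in> measurable \<mu> config_space"
    unfolding measurable_cong_sets[OF assms(2) refl] by measurable
  have "measure \<mu> A = measure (distr \<mu> config_space (\<lambda>eta x. eta (x + z))) A"
    using assms(1) unfolding translation_invariant_def by simp
  also have "\<dots> = measure \<mu> ((\<lambda>eta x. eta (x + z)) -` A \<inter> space \<mu>)"
    by (rule measure_distr[OF shift assms(3)])
  finally show ?thesis
    by (simp add: space vimage_def)
qed

lemma sqrt_half_at_top: "filterlim (\<lambda>n. sqrt (real n) / 2) at_top sequentially"
proof -
  have "filterlim (\<lambda>n. sqrt (real n)) at_top sequentially"
    by (rule filterlim_compose[OF sqrt_at_top filterlim_real_sequentially])
  from filterlim_at_top_mult_tendsto_pos[OF tendsto_const[of "1 / 2"] _ this]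
  show ?thesis by simp
qed

lemma excess_prob_le_odometer_gradient_tail:
  assumes "prob_space \<mu>" "sets \<mu> = sets config_space" "translation_invariant \<mu>"
    and "stabilizable_measure \<mu>"
  shows "measure \<mu> {eta \<in> space \<mu>. 1 < (\<Sum>x\<in>{- int n..int n}. real (eta x) - 1) / sqrt (real n)}
    \<le> 2 * measure \<mu> {eta \<in> space \<mu>. sqrt (real n) / 2 < \<bar>odometer_gradient eta\<bar>}"
    (is "measure \<mu> ?E \<le> _")
proof -
  interpret prob_space \<mu> by fact
  have space: "space \<mu> = UNIV"
    using sets_eq_imp_space_eq[OF assms(2)] by simp
  define c where "c = sqrt (real n) / 2"
  define tail where "tail z = {eta \<in> space \<mu>. c < \<bar>odometer_gradient (\<lambda>x. eta (x + z))\<bar>}" for z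
  have gradient_tail_sets: "{eta. c < \<bar>odometer_gradient eta\<bar>} \<in> sets config_space"
    using borel_measurable_abs[OF measurable_odometer_gradient]
    unfolding borel_measurable_iff_greater by simp
  have tail_sets: "tail z \<in> sets \<mu>" for z
    unfolding tail_def sets_eq_imp_space_eq[OF assms(2)] assms(2) by measurable
  have "AE eta in \<mu>. eta \<in> ?E \<longrightarrow> eta \<in> tail (- int n - 1) \<union> tail (int n)"
    using assms(4) unfolding stabilizable_measure_def
  proof eventually_elim
    case (elim eta)
    show ?case
    proof
      assume "eta \<in> ?E"
      then have excess: "1 < (\<Sum>x\<in>{- int n..int n}. real (eta x) - 1) / sqrt (real n)"
        by blast
      then have "sqrt (real n) \<noteq> 0"
        by (intro notI) simp
      then have "0 < sqrt (real n)"
        using real_sqrt_ge_zero[of "real n"] by linarith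
      then have "2 * c < (\<Sum>x\<in>{- int n..int n}. real (eta x) - 1)"
        using excess by (simp add: c_def less_divide_eq)
      also have "\<dots> \<le> odometer_gradient (\<lambda>x. eta (x + (- int n - 1)))
          - odometer_gradient (\<lambda>x. eta (x + int n))"
        using elim by (intro excess_le_odometer_gradient_difference stabilizable_imp_stabilizing_odometer)
      finally show "eta \<in> tail (- int n - 1) \<union> tail (int n)"
        unfolding tail_def space by auto
    qed
  qed
  then have "prob ?E \<le> prob (tail (- int n - 1) \<union> tail (int n))"
    by (rule finite_measure_mono_AE) (intro sets.Un tail_sets)
  also have "\<dots> \<le> prob (tail (- int n - 1)) + prob (tail (int n))"
    by (intro measure_Un_le tail_sets)
  also have "\<dots> = 2 * prob {eta \<in> space \<mu>. c < \<bar>odometer_gradient eta\<bar>}"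
    unfolding tail_def
    using translation_invariant_prob_shift[OF assms(3,2) gradient_tail_sets] by (simp add: space)
  finally show ?thesis
    unfolding c_def .
qed

lemma stabilizable_excess_prob_tendsto_0:
  assumes "prob_space \<mu>" "sets \<mu> = sets config_space" "translation_invariant \<mu>"
    and "stabilizable_measure \<mu>"
  shows "(\<lambda>n. measure \<mu> {eta \<in> space \<mu>.
            1 < (\<Sum>x\<in>{- int n..int n}. real (eta x) - 1) / sqrt (real n)}) \<longlonglongrightarrow> 0"
proof (rule tendsto_sandwich[OF _ _ tendsto_const])
  interpret prob_space \<mu> by fact
  have "(\<lambda>eta. \<bar>odometer_gradient eta\<bar>) \<in> borel_measurable \<mu>"
    unfolding measurable_cong_sets[OF assms(2) refl] by measurable
  then have "(\<lambda>n. prob {eta \<in> space \<mu>. sqrt (real n) / 2 < \<bar>odometer_gradient eta\<bar>}) \<longlonglongrightarrow> 0"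
    by (rule filterlim_compose[OF tail_prob_tendsto_0 sqrt_half_at_top])
  then show "(\<lambda>n. 2 * prob {eta \<in> space \<mu>. sqrt (real n) / 2 < \<bar>odometer_gradient eta\<bar>})
      \<longlonglongrightarrow> 0"
    by (rule tendsto_mult_right_zero)
qed (use excess_prob_le_odometer_gradient_tail[OF assms] in \<open>simp_all add: always_eventually\<close>)

theorem theorem3p5:
  fixes \<mu> :: "config measure"
  assumes "prob_space \<mu>"
    and "sets \<mu> = sets config_space"
    and "translation_invariant \<mu>"
    and "(\<integral>\<^sup>+ eta. ennreal (real (eta 0)) \<partial>\<mu>) = 1"
    and "\<exists>m \<sigma>. \<sigma> > 0 \<and>
           weak_conv_m
             (\<lambda>n. distr \<mu> borel
                (\<lambda>eta. (\<Sum>x\<in>{- int n..int n}. (real (eta x) - 1)) / sqrt (real n)))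
             (density lborel (normal_density m \<sigma>))"
  shows "\<not> stabilizable_measure \<mu>"
proof
  assume "stabilizable_measure \<mu>"
  interpret prob_space \<mu> by fact
  define Z where "Z n eta = (\<Sum>x\<in>{- int n..int n}. (real (eta x) - 1)) / sqrt (real n)" for n eta
  obtain m \<sigma> where "0 < \<sigma>"
    and clt: "weak_conv_m (\<lambda>n. distr \<mu> borel (Z n)) (density lborel (normal_density m \<sigma>))"
    using assms(5) unfolding Z_def by blast
  have "Z n \<in> borel_measurable \<mu>" for n
    unfolding Z_def measurable_cong_sets[OF assms(2) refl] by measurable
  then have cdf_Z: "cdf (distr \<mu> borel (Z n)) 1 = 1 - prob {eta \<in> space \<mu>. 1 < Z n eta}" for n
    by (rule cdf_distr_eq)
  have "(\<lambda>n. cdf (distr \<mu> borel (Z n)) 1) \<longlonglongrightarrow> cdf (density lborel (normal_density m \<sigma>)) 1"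
    using clt normal_cdf(1)[OF \<open>0 < \<sigma>\<close>] unfolding weak_conv_m_def weak_conv_def by blast
  moreover have "(\<lambda>n. cdf (distr \<mu> borel (Z n)) 1) \<longlonglongrightarrow> 1 - 0"
    unfolding cdf_Z Z_def
    using stabilizable_excess_prob_tendsto_0[OF assms(1-3) \<open>stabilizable_measure \<mu>\<close>]
    by (intro tendsto_diff tendsto_const)
  ultimately have "cdf (density lborel (normal_density m \<sigma>)) 1 = 1"
    using LIMSEQ_unique by fastforce
  with normal_cdf(2)[OF \<open>0 < \<sigma>\<close>, of m 1] show False
    by linarith
qed

end
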